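(* Let $G=A\star_C B$ be an amalgamated free product and let $g=x_{-r}x_{-r+1}\cdots x_0\cdots x_{r-1}x_r$ be a reduced word in $G$ with $r\ge1$, where $x_i\in A\setminus C$ for all $i\equiv r\pmod 2$ and $x_i\in B\setminus C$ otherwise. Suppose $x_{-r}$ and $x_r$ are both $2$-RF rel $C$ (in $A$), and $x_0$ is $n$-RTF rel $C$ (in its factor) for some $2\le n\le\infty$. Then $g\in G\setminus B$ is $n$-RF rel $B$.
   Context: For a group $G$, subgroup $D$, and $2\le n\le\infty$: $a\in G\setminus D$ is $n$-RF rel $D$ if $a^{e_1}d_1\cdots a^{e_k}d_k\ne\mathrm{id}$ for all $k\ge1$, $e_i\in\{\pm1\}$, $d_i\in D$ such that $d_i\ne\mathrm{id}$ whenever $e_i=-e_{i+1}$ (indices mod $k$), and fewer than $n$ of the $e_i$ are $+1$ and fewer than $n$ are $-1$. $a\in G\setminus D$ is $n$-RTF rel $D$ if $ad_1ad_2\cdots ad_k\ne\mathrm{id}$ for all $d_i\in D$ and $1\le k<n$. *)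

theory Defs
  imports "HOL-Algebra.Algebra" "HOL-Library.Extended_Nat"
begin

definition mprod :: "('a, 'b) monoid_scheme \<Rightarrow> 'a list \<Rightarrow> 'a" where
  "mprod G xs = foldr (\<lambda>x acc. x \<otimes>\<^bsub>G\<^esub> acc) xs \<one>\<^bsub>G\<^esub>"

definition reduced_word :: "'a set \<Rightarrow> 'a set \<Rightarrow> 'a set \<Rightarrow> 'a list \<Rightarrow> bool" where
  "reduced_word A B C xs \<longleftrightarrow>
     (\<forall>x\<in>set xs. x \<in> (A - C) \<union> (B - C)) \<and>
     (\<forall>i. Suc i < length xs \<longrightarrow>
        \<not> ((xs!i \<in> A - C \<and> xs!Suc i \<in> A - C) \<or> (xs!i \<in> B - C \<and> xs!Suc i \<in> B - C)))"

text \<open>G is the (internal) amalgamated free product of its subgroups A and B over C: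
  A and B generate G, A \<inter> B = C, and every nonempty reduced alternating word is
  nontrivial (normal form theorem characterisation).\<close>
definition amalgamated_free_product ::
  "('a, 'b) monoid_scheme \<Rightarrow> 'a set \<Rightarrow> 'a set \<Rightarrow> 'a set \<Rightarrow> bool" where
  "amalgamated_free_product G A B C \<longleftrightarrow>
     group G \<and> subgroup A G \<and> subgroup B G \<and> A \<inter> B = C \<and>
     generate G (A \<union> B) = carrier G \<and>
     (\<forall>xs. xs \<noteq> [] \<and> reduced_word A B C xs \<longrightarrow> mprod G xs \<noteq> \<one>\<^bsub>G\<^esub>)"

text \<open>The word a^{e_1} d_1 \<cdots> a^{e_k} d_k, encoded as a list of pairs (e_i, d_i),
  where e_i = True means +1 and False means -1.\<close>
definition rf_word :: "('a, 'b) monoid_scheme \<Rightarrow> 'a \<Rightarrow> (bool \<times> 'a) list \<Rightarrow> 'a" where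
  "rf_word G a ps = mprod G (map (\<lambda>(e, d). (if e then a else inv\<^bsub>G\<^esub> a) \<otimes>\<^bsub>G\<^esub> d) ps)"

definition n_RF :: "('a, 'b) monoid_scheme \<Rightarrow> enat \<Rightarrow> 'a set \<Rightarrow> 'a \<Rightarrow> bool" where
  "n_RF G n D a \<longleftrightarrow> a \<in> carrier G - D \<and>
     (\<forall>ps. ps \<noteq> [] \<and> (\<forall>p\<in>set ps. snd p \<in> D) \<and>
        (\<forall>i<length ps. fst (ps!i) \<noteq> fst (ps!((i+1) mod length ps)) \<longrightarrow> snd (ps!i) \<noteq> \<one>\<^bsub>G\<^esub>) \<and>
        enat (length (filter fst ps)) < n \<and>
        enat (length (filter (\<lambda>p. \<not> fst p) ps)) < n
      \<longrightarrow> rf_word G a ps \<noteq> \<one>\<^bsub>G\<^esub>)"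

definition n_RTF :: "('a, 'b) monoid_scheme \<Rightarrow> enat \<Rightarrow> 'a set \<Rightarrow> 'a \<Rightarrow> bool" where
  "n_RTF G n D a \<longleftrightarrow> a \<in> carrier G - D \<and>
     (\<forall>ds. ds \<noteq> [] \<and> set ds \<subseteq> D \<and> enat (length ds) < n
        \<longrightarrow> mprod G (map (\<lambda>d. a \<otimes>\<^bsub>G\<^esub> d) ds) \<noteq> \<one>\<^bsub>G\<^esub>)"

end

theory Submission
  imports Defs
begin

(*
  Write g = L x_0 R with L = x_{-r} ... x_{-1} and R = x_1 ... x_r, so that g^e = P_e y_e Q_e
  with y_e = x_0^e.  Conjugating a word g^{e_1} b_1 ... g^{e_k} b_k (b_i in B) by P_{e_1} turns
  it into the product of the syllables y_{e_i} J_i with junctions J_i = Q_{e_i} b_i P_{e_(i+1)},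
  indices taken cyclically.  Peeling off the letters of R and L from the outside shows that each
  junction either lies in C, which 2-RF of x_{-r} and x_r rules out unless e_i = e_(i+1), or is a
  reduced word beginning and ending in the factor that does not contain x_0.  A maximal run
  y c_1 y c_2 ... y c_m y over C-junctions has fewer than n letters y, so by n-RTF of x_0 it is a
  single letter of x_0's factor outside C.  Rotating the cyclic word so that it ends at a reduced
  junction therefore exhibits it as a nonempty reduced word, which is nontrivial in the amalgam;
  if all junctions lie in C, all signs agree and the word is y c_1 ... y c_k with k < n.
*)

lemma mprod_Nil [simp]: "mprod G [] = \<one>\<^bsub>G\<^esub>"
  by (simp add: mprod_def)

lemma mprod_Cons [simp]: "mprod G (a # xs) = a \<otimes>\<^bsub>G\<^esub> mprod G xs"
  by (simp add: mprod_def)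

lemma mprod_carrier_update [simp]: "mprod (G\<lparr>carrier := H\<rparr>) = mprod G"
  by (simp add: mprod_def fun_eq_iff)

lemma n_RTF_word_ne_one:
  "n_RTF G n D a \<Longrightarrow> ds \<noteq> [] \<Longrightarrow> set ds \<subseteq> D \<Longrightarrow> enat (length ds) < n
    \<Longrightarrow> mprod G (map (\<lambda>d. a \<otimes>\<^bsub>G\<^esub> d) ds) \<noteq> \<one>\<^bsub>G\<^esub>"
  by (simp add: n_RTF_def)

lemma n_RF_word_ne_one:
  assumes "n_RF G n D a" and "ps \<noteq> []" and "\<forall>p\<in>set ps. snd p \<in> D"
    and "\<forall>i<length ps. fst (ps!i) \<noteq> fst (ps!((i+1) mod length ps)) \<longrightarrow> snd (ps!i) \<noteq> \<one>\<^bsub>G\<^esub>"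
    and "enat (length (filter fst ps)) < n" and "enat (length (filter (\<lambda>p. \<not> fst p) ps)) < n"
  shows "rf_word G a ps \<noteq> \<one>\<^bsub>G\<^esub>"
  using assms unfolding n_RF_def by blast

context group
begin

lemma inv_mem_subgroup_iff: "subgroup H G \<Longrightarrow> y \<in> carrier G \<Longrightarrow> inv y \<in> H \<longleftrightarrow> y \<in> H"
  by (metis inv_inv subgroup.m_inv_closed)

lemma mprod_closed [intro, simp]: "set xs \<subseteq> carrier G \<Longrightarrow> mprod G xs \<in> carrier G"
  by (induction xs) auto

lemma mprod_append:
  "set xs \<subseteq> carrier G \<Longrightarrow> set ys \<subseteq> carrier G \<Longrightarrow> mprod G (xs @ ys) = mprod G xs \<otimes> mprod G ys"
  by (induction xs) (auto simp: m_assoc)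

lemma mprod_in_subgroup: "subgroup H G \<Longrightarrow> set xs \<subseteq> H \<Longrightarrow> mprod G xs \<in> H"
  by (induction xs) (auto intro: subgroup.m_closed subgroup.one_closed)

lemma inv_mprod: "set xs \<subseteq> carrier G \<Longrightarrow> inv (mprod G xs) = mprod G (rev (map (m_inv G) xs))"
proof (induction xs)
  case (Cons a xs)
  then have "set (rev (map (m_inv G) xs)) \<subseteq> carrier G"
    by auto
  with Cons show ?case
    by (simp add: mprod_append inv_mult_group)
qed simp

lemma mprod_rotate_eq_one:
  assumes "set xs \<subseteq> carrier G"
  shows "mprod G (rotate m xs) = \<one> \<longleftrightarrow> mprod G xs = \<one>"
proof -
  let ?k = "m mod length xs"
  have closed: "set (take ?k xs) \<subseteq> carrier G" "set (drop ?k xs) \<subseteq> carrier G"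
    using assms by (auto dest: in_set_takeD in_set_dropD)
  then have "mprod G (drop ?k xs) \<otimes> mprod G (take ?k xs) = \<one>
      \<longleftrightarrow> mprod G (take ?k xs) \<otimes> mprod G (drop ?k xs) = \<one>"
    using inv_comm by blast
  also have "mprod G (take ?k xs) \<otimes> mprod G (drop ?k xs) = mprod G xs"
    using closed by (simp flip: mprod_append)
  finally show ?thesis
    using closed by (simp add: rotate_drop_take mprod_append)
qed

lemma mprod_telescope:
  assumes "\<And>i. i \<le> m \<Longrightarrow> p i \<in> carrier G" and "\<And>i. i < m \<Longrightarrow> u i \<in> carrier G"
  shows "mprod G (map (\<lambda>i. p i \<otimes> u i) [0..<m]) \<otimes> p m
       = p 0 \<otimes> mprod G (map (\<lambda>i. u i \<otimes> p (Suc i)) [0..<m])"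
  using assms
proof (induction m)
  case (Suc m)
  have closed: "set (map (\<lambda>i. p i \<otimes> u i) [0..<m]) \<subseteq> carrier G"
    "set (map (\<lambda>i. u i \<otimes> p (Suc i)) [0..<m]) \<subseteq> carrier G"
    "p m \<in> carrier G" "u m \<in> carrier G" "p (Suc m) \<in> carrier G" "p 0 \<in> carrier G"
    using Suc.prems by auto
  have "mprod G (map (\<lambda>i. p i \<otimes> u i) [0..<Suc m]) \<otimes> p (Suc m)
      = (mprod G (map (\<lambda>i. p i \<otimes> u i) [0..<m]) \<otimes> p m) \<otimes> (u m \<otimes> p (Suc m))"
    using closed by (simp add: mprod_append m_assoc)
  also have "\<dots> = p 0 \<otimes> (mprod G (map (\<lambda>i. u i \<otimes> p (Suc i)) [0..<m]) \<otimes> (u m \<otimes> p (Suc m)))"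
    using Suc closed by (simp add: m_assoc)
  also have "\<dots> = p 0 \<otimes> mprod G (map (\<lambda>i. u i \<otimes> p (Suc i)) [0..<Suc m])"
    using closed by (simp add: mprod_append)
  finally show ?case .
qed simp

lemma mprod_shift:
  assumes "a \<in> carrier G" and "f ` set xs \<subseteq> carrier G"
  shows "a \<otimes> mprod G (map (\<lambda>d. f d \<otimes> a) xs) = mprod G (map (\<lambda>d. a \<otimes> f d) xs) \<otimes> a"
  using assms(2)
proof (induction xs)
  case (Cons d xs)
  then have "set (map (\<lambda>d. f d \<otimes> a) xs) \<subseteq> carrier G" "set (map (\<lambda>d. a \<otimes> f d) xs) \<subseteq> carrier G"
    "f d \<in> carrier G"
    using assms(1) by auto
  with Cons assms(1) show ?case
    by (simp add: m_assoc)
qed (simp add: assms)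

lemma n_RTF_inv:
  assumes D: "subgroup D G" and a: "n_RTF G n D a"
  shows "n_RTF G n D (inv a)"
  unfolding n_RTF_def
proof (intro conjI allI impI)
  have ac: "a \<in> carrier G" "a \<notin> D"
    using a by (auto simp: n_RTF_def)
  then show "inv a \<in> carrier G - D"
    by (metis DiffI D inv_closed inv_inv subgroup.m_inv_closed)
  fix ds
  assume ds: "ds \<noteq> [] \<and> set ds \<subseteq> D \<and> enat (length ds) < n"
  then have dc: "set ds \<subseteq> carrier G"
    using D subgroup.subset by blast
  show "mprod G (map (\<lambda>d. inv a \<otimes> d) ds) \<noteq> \<one>"
  proof
    assume "mprod G (map (\<lambda>d. inv a \<otimes> d) ds) = \<one>"
    then have "\<one> = inv (mprod G (map (\<lambda>d. inv a \<otimes> d) ds))"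
      by simp
    also have "\<dots> = mprod G (rev (map (m_inv G) (map (\<lambda>d. inv a \<otimes> d) ds)))"
      using ac dc by (intro inv_mprod) auto
    also have "map (m_inv G) (map (\<lambda>d. inv a \<otimes> d) ds) = map (\<lambda>d. inv d \<otimes> a) ds"
      using ac dc by (auto simp: inv_mult_group)
    finally have "mprod G (map (\<lambda>d. inv d \<otimes> a) (rev ds)) = \<one>"
      by (simp add: rev_map)
    moreover have "m_inv G ` set ds \<subseteq> carrier G"
      using dc by auto
    ultimately have "mprod G (map (\<lambda>d. a \<otimes> inv d) (rev ds)) \<otimes> a = a"
      using mprod_shift[of a "m_inv G" "rev ds"] ac by simp
    moreover have "mprod G (map (\<lambda>d. a \<otimes> inv d) (rev ds)) \<in> carrier G"
      using ac dc by (intro mprod_closed) auto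
    ultimately have "mprod G (map (\<lambda>d. a \<otimes> inv d) (rev ds)) = \<one>"
      using ac by simp
    moreover have "set (map (m_inv G) (rev ds)) \<subseteq> D"
      using ds D subgroup.m_inv_closed by fastforce
    ultimately show False
      using n_RTF_word_ne_one[OF a, of "map (m_inv G) (rev ds)"] ds by (simp add: comp_def)
  qed
qed

lemma n_RTF_block_notin:
  assumes D: "subgroup D G" and a: "n_RTF G n D a"
    and cs: "set cs \<subseteq> D" and len: "enat (Suc (length cs)) < n"
  shows "mprod G (map (\<lambda>c. a \<otimes> c) cs) \<otimes> a \<notin> D"
proof
  let ?u = "mprod G (map (\<lambda>c. a \<otimes> c) cs) \<otimes> a"
  assume u: "?u \<in> D"
  have ac: "a \<in> carrier G"
    using a by (simp add: n_RTF_def)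
  have cc: "set (map (\<lambda>c. a \<otimes> c) cs) \<subseteq> carrier G"
    using cs ac subgroup.subset[OF D] by auto
  have "mprod G (map (\<lambda>d. a \<otimes> d) (cs @ [inv ?u])) = \<one>"
    using ac cc by (simp add: mprod_append m_assoc[symmetric])
  moreover have "set (cs @ [inv ?u]) \<subseteq> D"
    using cs u D subgroup.m_inv_closed by auto
  ultimately show False
    using n_RTF_word_ne_one[OF a, of "cs @ [inv ?u]"] len by simp
qed

lemma n_RTF_constant_sign_word_ne_one:
  fixes ws :: "(bool \<times> 'a) list" and y :: "bool \<Rightarrow> 'a"
  assumes "ws \<noteq> []"
    and links: "\<forall>i<length ws. snd (ws ! i) \<in> D \<and> fst (ws ! (Suc i mod length ws)) = fst (ws ! i)"
    and y: "\<And>e. n_RTF G n D (y e)"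
    and count: "\<And>e. enat (length (filter (\<lambda>p. fst p = e) ws)) < n"
  shows "mprod G (map (\<lambda>(e, d). y e \<otimes> d) ws) \<noteq> \<one>"
proof -
  let ?e = "fst (ws ! 0)"
  have same_sign: "i < length ws \<Longrightarrow> fst (ws ! i) = ?e" for i
  proof (induction i)
    case (Suc i)
    then show ?case
      using links[rule_format, of i] by simp
  qed simp
  have map_eq: "map (\<lambda>(e, d). y e \<otimes> d) ws = map (\<lambda>d. y ?e \<otimes> d) (map snd ws)"
    by (rule nth_equalityI) (simp_all add: case_prod_beta same_sign)
  have "set (map snd ws) \<subseteq> D"
    using links by (auto simp: set_conv_nth)
  moreover have "\<forall>p\<in>set ws. fst p = ?e"
    using same_sign by (metis in_set_conv_nth)
  then have "filter (\<lambda>p. fst p = ?e) ws = ws"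
    by (simp add: filter_id_conv)
  then have "enat (length (map snd ws)) < n"
    using count[of ?e] by simp
  ultimately show ?thesis
    unfolding map_eq using n_RTF_word_ne_one[OF y, of "map snd ws"] assms(1) by simp
qed

lemma n_RTF_carrier_update:
  "H \<subseteq> carrier G \<Longrightarrow> n_RTF (G\<lparr>carrier := H\<rparr>) n D a \<longleftrightarrow> a \<in> H \<and> n_RTF G n D a"
  by (auto simp: n_RTF_def)

lemma n_RF_carrier_update:
  assumes H: "subgroup H G" and a: "n_RF (G\<lparr>carrier := H\<rparr>) n D a"
  shows "n_RF G n D a"
proof -
  have "a \<in> H"
    using a by (simp add: n_RF_def)
  then have inv_eq: "inv\<^bsub>G\<lparr>carrier := H\<rparr>\<^esub> a = inv a"
    using H by simp
  have "rf_word (G\<lparr>carrier := H\<rparr>) a ps = rf_word G a ps" for ps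
    unfolding rf_word_def inv_eq by simp
  moreover have "a \<in> carrier G"
    using \<open>a \<in> H\<close> H subgroup.subset by blast
  ultimately show ?thesis
    using a unfolding n_RF_def by simp
qed

lemma n_RF_2_conj_notin:
  assumes D: "subgroup D G" and a: "n_RF G 2 D a" and b: "b \<in> D" "b \<noteq> \<one>"
  shows "a \<otimes> b \<otimes> inv a \<notin> D" and "inv a \<otimes> b \<otimes> a \<notin> D"
proof -
  have ac: "a \<in> carrier G"
    using a by (simp add: n_RF_def)
  have bc: "b \<in> carrier G"
    using b D subgroup.subset by blast
  have one_lt_two: "enat 1 < 2"
    by (simp add: numeral_eq_enat)
  have words: "rf_word G a [(e, b), (\<not> e, c)] \<noteq> \<one>" if "c \<in> D" "c \<noteq> \<one>" for e c
    by (rule n_RF_word_ne_one[OF a]) (use b that one_lt_two in \<open>auto simp: less_Suc_eq\<close>)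
  have conj_notin: "z \<otimes> b \<otimes> inv z \<notin> D"
    if z: "z \<in> carrier G" and ne: "\<And>c. c \<in> D \<Longrightarrow> c \<noteq> \<one> \<Longrightarrow> z \<otimes> b \<otimes> inv z \<otimes> c \<noteq> \<one>" for z
  proof
    assume in_D: "z \<otimes> b \<otimes> inv z \<in> D"
    have "z \<otimes> b \<otimes> inv z \<noteq> \<one>"
      using inv_solve_right'[of \<one> "z \<otimes> b" z] z bc b(2) by simp
    moreover have "inv (z \<otimes> b \<otimes> inv z) \<in> D"
      using in_D by (rule subgroup.m_inv_closed[OF D])
    ultimately show False
      using ne[of "inv (z \<otimes> b \<otimes> inv z)"] z bc by simp
  qed
  show "a \<otimes> b \<otimes> inv a \<notin> D"
  proof (rule conj_notin[OF ac])
    fix c assume "c \<in> D" "c \<noteq> \<one>"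
    moreover have "c \<in> carrier G"
      using \<open>c \<in> D\<close> D subgroup.subset by blast
    ultimately show "a \<otimes> b \<otimes> inv a \<otimes> c \<noteq> \<one>"
      using words[of c True] ac bc by (simp add: rf_word_def m_assoc)
  qed
  have "inv a \<otimes> b \<otimes> inv (inv a) \<notin> D"
  proof (rule conj_notin)
    fix c assume "c \<in> D" "c \<noteq> \<one>"
    moreover have "c \<in> carrier G"
      using \<open>c \<in> D\<close> D subgroup.subset by blast
    ultimately show "inv a \<otimes> b \<otimes> inv (inv a) \<otimes> c \<noteq> \<one>"
      using words[of c False] ac bc by (simp add: rf_word_def m_assoc)
  qed (use ac in simp)
  then show "inv a \<otimes> b \<otimes> a \<notin> D"
    using ac by simp
qed

end

lemma successively_run_before:
  assumes "successively (\<lambda>p q. P p \<or> Q p \<and> f q = f p) (ys @ [w])" and "\<forall>p\<in>set ys. \<not> P p"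
  shows "\<forall>p\<in>set ys. Q p \<and> f p = f w"
  using assms
proof (induction ys)
  case (Cons y ys)
  have "successively (\<lambda>p q. P p \<or> Q p \<and> f q = f p) (ys @ [w])"
    using Cons.prems(1) by (simp add: successively_Cons)
  moreover have "\<forall>p\<in>set ys. \<not> P p"
    using Cons.prems(2) by simp
  ultimately have IH: "\<forall>p\<in>set ys. Q p \<and> f p = f w"
    by (rule Cons.IH)
  have "P y \<or> Q y \<and> f (hd (ys @ [w])) = f y"
    using Cons.prems(1) by (simp add: successively_Cons)
  then have "Q y" and "f (hd (ys @ [w])) = f y"
    using Cons.prems(2) by auto
  moreover have "f (hd (ys @ [w])) = f w"
    using IH by (cases ys) auto
  ultimately show ?case
    using IH by simp
qed simp

lemma successively_rotate_if_cyclic: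
  assumes "\<forall>i<length xs. R (xs ! i) (xs ! (Suc i mod length xs))"
  shows "successively R (rotate m xs)"
  unfolding successively_conv_nth
proof (intro allI impI)
  fix i
  assume i: "Suc i < length (rotate m xs)"
  let ?j = "(m + i) mod length xs"
  have "0 < length xs"
    using i by (cases xs) auto
  then have "?j < length xs" and next_j: "Suc ?j mod length xs = (m + Suc i) mod length xs"
    by (simp_all add: mod_Suc_eq)
  then have "R (xs ! ?j) (xs ! (Suc ?j mod length xs))"
    using assms by blast
  then show "R (rotate m xs ! i) (rotate m xs ! Suc i)"
    using i unfolding next_j by (simp add: nth_rotate del: add_Suc_right)
qed

lemma last_rotate_Suc:
  assumes "i < length xs"
  shows "last (rotate (Suc i) xs) = xs ! i"
proof -
  have "rotate (Suc i) xs \<noteq> []"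
    using assms by auto
  then have "last (rotate (Suc i) xs) = rotate (Suc i) xs ! (length xs - 1)"
    by (simp add: last_conv_nth del: rotate_Suc)
  also have "\<dots> = xs ! ((Suc i + (length xs - 1)) mod length xs)"
    using assms by (intro nth_rotate) auto
  also have "Suc i + (length xs - 1) = i + length xs"
    using assms by simp
  finally show ?thesis
    using assms by simp
qed

lemma length_filter_rotate: "length (filter P (rotate m xs)) = length (filter P xs)"
proof -
  let ?k = "m mod length xs"
  have "length (filter P xs) = length (filter P (take ?k xs)) + length (filter P (drop ?k xs))"
    by (metis append_take_drop_id filter_append length_append)
  then show ?thesis
    by (simp add: rotate_drop_take)
qed

definition different_factors :: "'a set \<Rightarrow> 'a set \<Rightarrow> 'a set \<Rightarrow> 'a \<Rightarrow> 'a \<Rightarrow> bool" where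
  "different_factors A B C a b \<longleftrightarrow> \<not> ((a \<in> A - C \<and> b \<in> A - C) \<or> (a \<in> B - C \<and> b \<in> B - C))"

lemma reduced_word_iff_successively:
  "reduced_word A B C xs \<longleftrightarrow>
     set xs \<subseteq> (A - C) \<union> (B - C) \<and> successively (different_factors A B C) xs"
  unfolding reduced_word_def successively_conv_nth different_factors_def by auto

locale amalgam = group G for G (structure) +
  fixes A B C :: "'a set"
  assumes amalgamated: "amalgamated_free_product G A B C"
begin

lemma subgroup_A: "subgroup A G"
  and subgroup_B: "subgroup B G"
  and A_Int_B: "A \<inter> B = C"
  and reduced_word_ne_one: "xs \<noteq> [] \<Longrightarrow> reduced_word A B C xs \<Longrightarrow> mprod G xs \<noteq> \<one>"
  using amalgamated unfolding amalgamated_free_product_def by auto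

lemma subgroup_C: "subgroup C G"
  using subgroups_Inter_pair[OF subgroup_A subgroup_B] A_Int_B by simp

lemma C_subset_carrier: "C \<subseteq> carrier G"
  using subgroup.subset[OF subgroup_C] .

lemma B_subset_carrier: "B \<subseteq> carrier G"
  using subgroup.subset[OF subgroup_B] .

definition factor :: "bool \<Rightarrow> 'a set" where
  "factor s = (if s then A else B)"

lemma subgroup_factor: "subgroup (factor s) G"
  by (simp add: factor_def subgroup_A subgroup_B)

lemma C_subset_factor: "C \<subseteq> factor s"
  using A_Int_B by (auto simp: factor_def)

lemma factor_subset_carrier: "factor s \<subseteq> carrier G"
  using subgroup.subset[OF subgroup_factor] .

lemma inv_in_factor_diff: "u \<in> factor s - C \<Longrightarrow> inv u \<in> factor s - C"
  using inv_mem_subgroup_iff[OF subgroup_factor] inv_mem_subgroup_iff[OF subgroup_C] factor_subset_carrier by blast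

lemma different_factors_if_opposite:
  "a \<in> factor t - C \<Longrightarrow> b \<in> factor (\<not> t) - C \<Longrightarrow> different_factors A B C a b"
  using A_Int_B by (cases t) (auto simp: factor_def different_factors_def)

lemma different_factors_inv:
  "a \<in> carrier G \<Longrightarrow> b \<in> carrier G \<Longrightarrow> different_factors A B C a b
    \<Longrightarrow> different_factors A B C (inv b) (inv a)"
  unfolding different_factors_def
  using inv_mem_subgroup_iff[OF subgroup_A] inv_mem_subgroup_iff[OF subgroup_B] inv_mem_subgroup_iff[OF subgroup_C] by blast

lemma reduced_word_carrier: "reduced_word A B C w \<Longrightarrow> set w \<subseteq> carrier G"
  unfolding reduced_word_def using subgroup.subset[OF subgroup_A] subgroup.subset[OF subgroup_B] by blast

definition reduced_form :: "bool \<Rightarrow> bool \<Rightarrow> 'a \<Rightarrow> bool" where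
  "reduced_form s t z \<longleftrightarrow> (\<exists>w. w \<noteq> [] \<and> reduced_word A B C w \<and>
     hd w \<in> factor s - C \<and> last w \<in> factor t - C \<and> mprod G w = z)"

lemma reduced_form_ne_one: "reduced_form s t z \<Longrightarrow> z \<noteq> \<one>"
  unfolding reduced_form_def using reduced_word_ne_one by blast

lemma reduced_form_carrier: "reduced_form s t z \<Longrightarrow> z \<in> carrier G"
  unfolding reduced_form_def using reduced_word_carrier by blast

lemma reduced_form_single:
  assumes "u \<in> factor s - C"
  shows "reduced_form s s u"
proof -
  have "u \<in> carrier G"
    using assms factor_subset_carrier by blast
  moreover have "u \<in> (A - C) \<union> (B - C)"
    using assms by (cases s) (auto simp: factor_def)
  ultimately show ?thesis
    unfolding reduced_form_def using assms
    by (intro exI[of _ "[u]"]) (simp add: reduced_word_iff_successively)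
qed

lemma reduced_form_mult:
  assumes "reduced_form s t z" and "reduced_form (\<not> t) u z'"
  shows "reduced_form s u (z \<otimes> z')"
proof -
  obtain w where w: "w \<noteq> []" "reduced_word A B C w" "hd w \<in> factor s - C"
    "last w \<in> factor t - C" "mprod G w = z"
    using assms(1) unfolding reduced_form_def by blast
  obtain w' where w': "w' \<noteq> []" "reduced_word A B C w'" "hd w' \<in> factor (\<not> t) - C"
    "last w' \<in> factor u - C" "mprod G w' = z'"
    using assms(2) unfolding reduced_form_def by blast
  have "reduced_word A B C (w @ w')"
    using w w' different_factors_if_opposite[OF w(4) w'(3)]
    by (auto simp: reduced_word_iff_successively successively_append_iff)
  moreover have "mprod G (w @ w') = z \<otimes> z'"
    using w w' reduced_word_carrier by (simp add: mprod_append)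
  ultimately show ?thesis
    unfolding reduced_form_def using w w' by (intro exI[of _ "w @ w'"]) auto
qed

lemma reduced_form_inv:
  assumes "reduced_form s t z"
  shows "reduced_form t s (inv z)"
proof -
  obtain w where w: "w \<noteq> []" "reduced_word A B C w" "hd w \<in> factor s - C"
    "last w \<in> factor t - C" "mprod G w = z"
    using assms unfolding reduced_form_def by blast
  have wc: "set w \<subseteq> carrier G"
    using reduced_word_carrier w(2) by blast
  let ?w = "rev (map (m_inv G) w)"
  have "inv a \<in> (A - C) \<union> (B - C)" if "a \<in> set w" for a
  proof -
    have "a \<in> carrier G" and "a \<in> (A - C) \<union> (B - C)"
      using that wc w(2) unfolding reduced_word_def by auto
    then show ?thesis
      using inv_mem_subgroup_iff[OF subgroup_A] inv_mem_subgroup_iff[OF subgroup_B] inv_mem_subgroup_iff[OF subgroup_C] by simp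
  qed
  then have "set ?w \<subseteq> (A - C) \<union> (B - C)"
    by auto
  moreover have "successively (different_factors A B C) ?w"
    using w(2) wc unfolding reduced_word_iff_successively successively_rev successively_map
    by (auto elim!: successively_mono intro: different_factors_inv)
  ultimately have "reduced_word A B C ?w"
    by (simp add: reduced_word_iff_successively)
  moreover have "hd ?w = inv (last w)" and "last ?w = inv (hd w)"
    using w(1) by (simp_all add: hd_rev last_rev last_map hd_map)
  moreover have "mprod G ?w = inv z"
    using inv_mprod[OF wc] w(5) by simp
  ultimately show ?thesis
    unfolding reduced_form_def using w inv_in_factor_diff by (intro exI[of _ ?w]) auto
qed

lemma reduced_form_conj:
  assumes "u \<in> factor s - C" and "v \<in> factor s - C" and "reduced_form (\<not> s) (\<not> s) z"
  shows "reduced_form s s (u \<otimes> z \<otimes> v)"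
  using reduced_form_mult[OF reduced_form_mult[OF reduced_form_single[OF assms(1)] assms(3)]]
    reduced_form_single[OF assms(2)]
  by simp

lemma conj_in_C_or_reduced_form:
  assumes "u \<in> factor s - C" and "v \<in> factor s - C" and "z \<in> C \<or> reduced_form (\<not> s) (\<not> s) z"
  shows "u \<otimes> z \<otimes> v \<in> C \<or> reduced_form s s (u \<otimes> z \<otimes> v)"
proof (cases "z \<in> C")
  case True
  then have "u \<otimes> z \<otimes> v \<in> factor s"
    using assms(1,2) C_subset_factor subgroup.m_closed[OF subgroup_factor] by blast
  then show ?thesis
    using reduced_form_single by blast
next
  case False
  then show ?thesis
    using reduced_form_conj[OF assms(1,2)] assms(3) by blast
qed

lemma nested_conj_in_C_or_reduced_form:
  assumes "j \<le> d"
    and step: "\<And>i. j \<le> i \<Longrightarrow> i < d \<Longrightarrow>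
      Z (Suc i) = u i \<otimes> Z i \<otimes> v i \<and> u i \<in> factor (even i) - C \<and> v i \<in> factor (even i) - C"
    and "Z j \<in> C \<or> reduced_form (odd j) (odd j) (Z j)"
  shows "Z d \<in> C \<or> reduced_form (odd d) (odd d) (Z d)"
  using assms(1)
proof (induction d rule: dec_induct)
  case (step i)
  then show ?case
    using conj_in_C_or_reduced_form[of "u i" "even i" "v i" "Z i"] assms(2)[of i] by simp
qed (rule assms(3))

lemma nested_conj_reduced_form:
  assumes "j \<le> d"
    and step: "\<And>i. j \<le> i \<Longrightarrow> i < d \<Longrightarrow>
      Z (Suc i) = u i \<otimes> Z i \<otimes> v i \<and> u i \<in> factor (even i) - C \<and> v i \<in> factor (even i) - C"
    and "reduced_form (odd j) (odd j) (Z j)"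
  shows "reduced_form (odd d) (odd d) (Z d)"
  using assms(1)
proof (induction d rule: dec_induct)
  case (step i)
  then show ?case
    using reduced_form_conj[of "u i" "even i" "v i" "Z i"] assms(2)[of i] by simp
qed (rule assms(3))

lemma RTF_run_reduced_form:
  assumes cs: "set cs \<subseteq> C" and a: "a \<in> factor s" "n_RTF G n C a"
    and len: "enat (Suc (length cs)) < n" and J: "reduced_form (\<not> s) (\<not> s) J"
  shows "reduced_form s (\<not> s) (mprod G (map (\<lambda>c. a \<otimes> c) cs) \<otimes> a \<otimes> J)"
proof -
  let ?u = "mprod G (map (\<lambda>c. a \<otimes> c) cs) \<otimes> a"
  have "?u \<notin> C"
    using n_RTF_block_notin[OF subgroup_C a(2) cs len] .
  moreover have "set cs \<subseteq> factor s"
    using cs C_subset_factor by blast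
  then have "set (map (\<lambda>c. a \<otimes> c) cs) \<subseteq> factor s"
    using a(1) subgroup.m_closed[OF subgroup_factor] by auto
  then have "?u \<in> factor s"
    using a(1) by (intro subgroup.m_closed[OF subgroup_factor] mprod_in_subgroup[OF subgroup_factor])
  ultimately show ?thesis
    using reduced_form_mult[OF reduced_form_single J] by simp
qed

lemma syllables_reduced_form:
  fixes ws :: "(bool \<times> 'a) list" and y :: "bool \<Rightarrow> 'a"
  assumes "ws \<noteq> []" and "set (map snd ws) \<subseteq> carrier G"
    and "successively (\<lambda>p q. reduced_form (\<not> s) (\<not> s) (snd p) \<or> snd p \<in> C \<and> fst q = fst p) ws"
    and "reduced_form (\<not> s) (\<not> s) (snd (last ws))"
    and y: "\<And>e. y e \<in> factor s \<and> n_RTF G n C (y e)"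
    and "\<And>e. enat (length (filter (\<lambda>p. fst p = e) ws)) < n"
  shows "reduced_form s (\<not> s) (mprod G (map (\<lambda>(e, J). y e \<otimes> J) ws))"
  using assms(1-4,6)
proof (induction "length ws" arbitrary: ws rule: less_induct)
  case less
  let ?f = "\<lambda>(e, J). y e \<otimes> J"
  let ?J = "\<lambda>p. reduced_form (\<not> s) (\<not> s) (snd p)"
  have yc: "y e \<in> carrier G" for e
    using y factor_subset_carrier by blast
  have count_le: "enat (length (filter (\<lambda>p. fst p = e) xs)) < n"
    if "length (filter (\<lambda>p. fst p = e) xs) \<le> length (filter (\<lambda>p. fst p = e) ws)" for e xs
    using that less.prems(5)[of e] by (meson enat_ord_simps(1) order.strict_trans1)
  have "\<exists>p\<in>set ws. ?J p"
    using less.prems(1,4) last_in_set by blast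
  then obtain ys w zs where ws: "ws = (ys @ [w]) @ zs" and w: "?J w" and ys: "\<forall>p\<in>set ys. \<not> ?J p"
    using split_list_first_prop[of ws ?J] by auto
  have "successively (\<lambda>p q. ?J p \<or> snd p \<in> C \<and> fst q = fst p) (ys @ [w])"
    using less.prems(3) unfolding ws successively_append_iff by blast
  then have run: "\<forall>p\<in>set ys. snd p \<in> C \<and> fst p = fst w"
    using ys by (rule successively_run_before)
  let ?e = "fst w"
  have run_carrier: "set (map (\<lambda>c. y ?e \<otimes> c) (map snd ys)) \<subseteq> carrier G"
    using run C_subset_carrier yc by auto
  have run_map: "map ?f ys = map (\<lambda>c. y ?e \<otimes> c) (map snd ys)"
    using run by auto
  have "mprod G (map ?f (ys @ [w])) = mprod G (map (\<lambda>c. y ?e \<otimes> c) (map snd ys)) \<otimes> (y ?e \<otimes> snd w)"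
    using run_carrier yc reduced_form_carrier[OF w] by (simp add: run_map mprod_append case_prod_beta)
  then have block_eq: "mprod G (map ?f (ys @ [w]))
      = mprod G (map (\<lambda>c. y ?e \<otimes> c) (map snd ys)) \<otimes> y ?e \<otimes> snd w"
    using run_carrier yc reduced_form_carrier[OF w] by (simp add: m_assoc)
  have "filter (\<lambda>p. fst p = ?e) (ys @ [w]) = ys @ [w]"
    using run by simp
  then have "enat (Suc (length (map snd ys))) < n"
    using count_le[of ?e "ys @ [w]"] by (simp add: ws)
  moreover have "set (map snd ys) \<subseteq> C"
    using run by auto
  ultimately have block: "reduced_form s (\<not> s) (mprod G (map ?f (ys @ [w])))"
    unfolding block_eq using y w by (intro RTF_run_reduced_form) auto
  show ?case
  proof (cases "zs = []")
    case True
    then show ?thesis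
      using block ws by simp
  next
    case False
    have "reduced_form s (\<not> s) (mprod G (map ?f zs))"
    proof (rule less.hyps)
      show "length zs < length ws" "zs \<noteq> []"
        using ws False by simp_all
      show "set (map snd zs) \<subseteq> carrier G"
        using less.prems(2) ws by auto
      show "successively (\<lambda>p q. ?J p \<or> snd p \<in> C \<and> fst q = fst p) zs"
        using less.prems(3) unfolding ws successively_append_iff by blast
      show "?J (last zs)"
        using less.prems(4) ws False by simp
      show "enat (length (filter (\<lambda>p. fst p = e) zs)) < n" for e
        by (rule count_le) (simp add: ws)
    qed
    moreover have "set (map ?f (ys @ [w])) \<subseteq> carrier G" "set (map ?f zs) \<subseteq> carrier G"
      using less.prems(2) yc unfolding ws by (auto simp: case_prod_beta)
    then have "mprod G (map ?f ws) = mprod G (map ?f (ys @ [w])) \<otimes> mprod G (map ?f zs)"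
      unfolding ws map_append by (rule mprod_append)
    ultimately show ?thesis
      using reduced_form_mult[OF block] by simp
  qed
qed

lemma cyclic_syllables_ne_one:
  fixes ws :: "(bool \<times> 'a) list" and y :: "bool \<Rightarrow> 'a"
  assumes "ws \<noteq> []" and carrier: "set (map snd ws) \<subseteq> carrier G"
    and adjacent: "\<forall>i<length ws. reduced_form (\<not> s) (\<not> s) (snd (ws ! i))
      \<or> snd (ws ! i) \<in> C \<and> fst (ws ! (Suc i mod length ws)) = fst (ws ! i)"
    and y: "\<And>e. y e \<in> factor s \<and> n_RTF G n C (y e)"
    and count: "\<And>e. enat (length (filter (\<lambda>p. fst p = e) ws)) < n"
  shows "mprod G (map (\<lambda>(e, J). y e \<otimes> J) ws) \<noteq> \<one>"
proof -
  let ?f = "\<lambda>(e, J). y e \<otimes> J"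
  have yc: "y e \<in> carrier G" for e
    using y factor_subset_carrier by blast
  have f_carrier: "set (map ?f ws) \<subseteq> carrier G"
    using carrier yc by auto
  show ?thesis
  proof (cases "\<exists>i<length ws. reduced_form (\<not> s) (\<not> s) (snd (ws ! i))")
    case True
    then obtain i where i: "i < length ws" "reduced_form (\<not> s) (\<not> s) (snd (ws ! i))"
      by blast
    have "reduced_form s (\<not> s) (mprod G (map ?f (rotate (Suc i) ws)))"
    proof (rule syllables_reduced_form)
      show "rotate (Suc i) ws \<noteq> []" "set (map snd (rotate (Suc i) ws)) \<subseteq> carrier G"
        using assms(1) carrier by simp_all
      show "successively (\<lambda>p q. reduced_form (\<not> s) (\<not> s) (snd p) \<or> snd p \<in> C \<and> fst q = fst p)
          (rotate (Suc i) ws)"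
        using adjacent by (intro successively_rotate_if_cyclic) blast
      show "reduced_form (\<not> s) (\<not> s) (snd (last (rotate (Suc i) ws)))"
        unfolding last_rotate_Suc[OF i(1)] by (rule i(2))
      show "enat (length (filter (\<lambda>p. fst p = e) (rotate (Suc i) ws))) < n" for e
        unfolding length_filter_rotate by (rule count)
    qed (use y in blast)
    then have "mprod G (rotate (Suc i) (map ?f ws)) \<noteq> \<one>"
      using reduced_form_ne_one by (simp add: rotate_map)
    then show ?thesis
      using mprod_rotate_eq_one[OF f_carrier] by blast
  next
    case False
    then have "\<forall>i<length ws. snd (ws ! i) \<in> C \<and> fst (ws ! (Suc i mod length ws)) = fst (ws ! i)"
      using adjacent by blast
    then show ?thesis
      using n_RTF_constant_sign_word_ne_one[OF assms(1)] y count by blast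
  qed
qed

lemma conj_reduced_form:
  assumes a: "a \<in> A - C" and b: "b \<in> B" and conj: "b \<in> C \<Longrightarrow> a \<otimes> b \<otimes> inv a \<notin> C"
  shows "reduced_form True True (a \<otimes> b \<otimes> inv a)"
proof -
  have a_factor: "a \<in> factor True - C" "inv a \<in> factor True - C"
    using a inv_in_factor_diff[of a True] by (simp_all add: factor_def)
  show ?thesis
  proof (cases "b \<in> C")
    case True
    then have "a \<otimes> b \<otimes> inv a \<in> factor True"
      using a_factor C_subset_factor subgroup.m_closed[OF subgroup_factor] by blast
    then show ?thesis
      using conj True reduced_form_single by blast
  next
    case False
    then have "reduced_form False False b"
      using b reduced_form_single[of b False] by (simp add: factor_def)
    then show ?thesis
      using reduced_form_conj[OF a_factor] by simp
  qed
qed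

end

locale centred_word = amalgam +
  fixes x :: "int \<Rightarrow> 'a" and r :: nat
  assumes r_pos: "1 \<le> r"
    and x_A: "\<And>i. - int r \<le> i \<Longrightarrow> i \<le> int r \<Longrightarrow> even (i - int r) \<Longrightarrow> x i \<in> A - C"
    and x_B: "\<And>i. - int r \<le> i \<Longrightarrow> i \<le> int r \<Longrightarrow> odd (i - int r) \<Longrightarrow> x i \<in> B - C"
    and left_end: "n_RF (G\<lparr>carrier := A\<rparr>) 2 C (x (- int r))"
    and right_end: "n_RF (G\<lparr>carrier := A\<rparr>) 2 C (x (int r))"
begin

lemma x_in_factor: "- int r \<le> i \<Longrightarrow> i \<le> int r \<Longrightarrow> x i \<in> factor (even (i - int r)) - C"
  using x_A x_B by (auto simp: factor_def)

lemma x_carrier: "- int r \<le> i \<Longrightarrow> i \<le> int r \<Longrightarrow> x i \<in> carrier G"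
  using x_in_factor factor_subset_carrier by blast

lemma x_right_in_factor: "d < r \<Longrightarrow> x (int r - int d) \<in> factor (even d) - C"
  using x_in_factor[of "int r - int d"] by simp

lemma x_left_in_factor: "d < r \<Longrightarrow> x (int d - int r) \<in> factor (even d) - C"
  using x_in_factor[of "int d - int r"] by simp

definition right_seg :: "nat \<Rightarrow> 'a" where
  "right_seg d = mprod G (map x [int r - int d + 1 .. int r])"

definition left_seg :: "nat \<Rightarrow> 'a" where
  "left_seg d = mprod G (map x [- int r .. int d - int r - 1])"

lemma right_seg_0 [simp]: "right_seg 0 = \<one>"
  by (simp add: right_seg_def)

lemma left_seg_0 [simp]: "left_seg 0 = \<one>"
  by (simp add: left_seg_def)

lemma right_seg_carrier: "d \<le> r \<Longrightarrow> right_seg d \<in> carrier G"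
  unfolding right_seg_def by (rule mprod_closed) (auto intro: x_carrier)

lemma left_seg_carrier: "d \<le> r \<Longrightarrow> left_seg d \<in> carrier G"
  unfolding left_seg_def by (rule mprod_closed) (auto intro: x_carrier)

lemma right_seg_Suc: "d < r \<Longrightarrow> right_seg (Suc d) = x (int r - int d) \<otimes> right_seg d"
  unfolding right_seg_def using upto_rec1[of "int r - int d" "int r"] by simp

lemma left_seg_Suc: "d < r \<Longrightarrow> left_seg (Suc d) = left_seg d \<otimes> x (int d - int r)"
proof -
  assume d: "d < r"
  have "[- int r .. int (Suc d) - int r - 1] = [- int r .. int d - int r - 1] @ [int d - int r]"
    using upto_rec2[of "- int r" "int d - int r"] by simp
  moreover have "set (map x [- int r .. int d - int r - 1]) \<subseteq> carrier G"
    using d by (auto intro: x_carrier)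
  ultimately show ?thesis
    unfolding left_seg_def using d x_carrier[of "int d - int r"] by (simp add: mprod_append)
qed

lemma right_B_left_in_C_or_reduced_form:
  assumes "b \<in> B"
  shows "right_seg r \<otimes> b \<otimes> left_seg r \<in> C \<or> reduced_form (odd r) (odd r) (right_seg r \<otimes> b \<otimes> left_seg r)"
proof (rule nested_conj_in_C_or_reduced_form[where Z = "\<lambda>d. right_seg d \<otimes> b \<otimes> left_seg d"])
  fix d
  assume "d < r"
  moreover have "b \<in> carrier G"
    using assms B_subset_carrier by blast
  ultimately show "right_seg (Suc d) \<otimes> b \<otimes> left_seg (Suc d)
      = x (int r - int d) \<otimes> (right_seg d \<otimes> b \<otimes> left_seg d) \<otimes> x (int d - int r)
    \<and> x (int r - int d) \<in> factor (even d) - C \<and> x (int d - int r) \<in> factor (even d) - C"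
    using right_seg_carrier left_seg_carrier x_carrier[of "int r - int d"] x_carrier[of "int d - int r"]
      x_right_in_factor x_left_in_factor
    by (simp add: right_seg_Suc left_seg_Suc m_assoc)
next
  have "b \<in> carrier G" "b \<in> C \<or> b \<in> factor False - C"
    using assms B_subset_carrier by (auto simp: factor_def)
  then show "right_seg 0 \<otimes> b \<otimes> left_seg 0 \<in> C \<or> reduced_form (odd 0) (odd 0) (right_seg 0 \<otimes> b \<otimes> left_seg 0)"
    using reduced_form_single[of b False] by auto
qed simp

lemma right_conj_reduced_form:
  assumes b: "b \<in> B" "b \<noteq> \<one>"
  shows "reduced_form (odd r) (odd r) (right_seg r \<otimes> b \<otimes> inv (right_seg r))"
proof (rule nested_conj_reduced_form[where Z = "\<lambda>d. right_seg d \<otimes> b \<otimes> inv (right_seg d)"])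
  show "1 \<le> r"
    by (rule r_pos)
  have bc: "b \<in> carrier G"
    using b B_subset_carrier by blast
  fix d
  assume "1 \<le> d" "d < r"
  then show "right_seg (Suc d) \<otimes> b \<otimes> inv (right_seg (Suc d))
      = x (int r - int d) \<otimes> (right_seg d \<otimes> b \<otimes> inv (right_seg d)) \<otimes> inv (x (int r - int d))
    \<and> x (int r - int d) \<in> factor (even d) - C \<and> inv (x (int r - int d)) \<in> factor (even d) - C"
    using bc right_seg_carrier x_carrier[of "int r - int d"] x_right_in_factor[of d]
      inv_in_factor_diff[OF x_right_in_factor[of d]]
    by (simp add: right_seg_Suc m_assoc inv_mult_group)
next
  have "x (int r) \<in> A - C"
    using x_A[of "int r"] by simp
  moreover have "x (int r) \<otimes> b \<otimes> inv (x (int r)) \<notin> C" if "b \<in> C"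
    using n_RF_2_conj_notin(1)[OF subgroup_C n_RF_carrier_update[OF subgroup_A right_end] that b(2)] .
  ultimately have "reduced_form True True (x (int r) \<otimes> b \<otimes> inv (x (int r)))"
    by (rule conj_reduced_form[OF _ b(1)])
  then show "reduced_form (odd 1) (odd 1) (right_seg 1 \<otimes> b \<otimes> inv (right_seg 1))"
    using right_seg_Suc[of 0] r_pos x_carrier[of "int r"] by simp
qed

lemma left_conj_reduced_form:
  assumes b: "b \<in> B" "b \<noteq> \<one>"
  shows "reduced_form (odd r) (odd r) (inv (left_seg r) \<otimes> b \<otimes> left_seg r)"
proof (rule nested_conj_reduced_form[where Z = "\<lambda>d. inv (left_seg d) \<otimes> b \<otimes> left_seg d"])
  show "1 \<le> r"
    by (rule r_pos)
  have bc: "b \<in> carrier G"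
    using b B_subset_carrier by blast
  fix d
  assume "1 \<le> d" "d < r"
  then show "inv (left_seg (Suc d)) \<otimes> b \<otimes> left_seg (Suc d)
      = inv (x (int d - int r)) \<otimes> (inv (left_seg d) \<otimes> b \<otimes> left_seg d) \<otimes> x (int d - int r)
    \<and> inv (x (int d - int r)) \<in> factor (even d) - C \<and> x (int d - int r) \<in> factor (even d) - C"
    using bc left_seg_carrier x_carrier[of "int d - int r"] x_left_in_factor[of d]
      inv_in_factor_diff[OF x_left_in_factor[of d]]
    by (simp add: left_seg_Suc m_assoc inv_mult_group)
next
  have xc: "x (- int r) \<in> carrier G"
    using x_carrier[of "- int r"] by simp
  have "inv (x (- int r)) \<in> A - C"
    using x_A[of "- int r"] inv_in_factor_diff[of "x (- int r)" True] by (simp add: factor_def)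
  moreover have "inv (x (- int r)) \<otimes> b \<otimes> inv (inv (x (- int r))) \<notin> C" if "b \<in> C"
    using n_RF_2_conj_notin(2)[OF subgroup_C n_RF_carrier_update[OF subgroup_A left_end] that b(2)] xc
    by simp
  ultimately have "reduced_form True True (inv (x (- int r)) \<otimes> b \<otimes> inv (inv (x (- int r))))"
    by (rule conj_reduced_form[OF _ b(1)])
  then show "reduced_form (odd 1) (odd 1) (inv (left_seg 1) \<otimes> b \<otimes> left_seg 1)"
    using left_seg_Suc[of 0] r_pos xc by simp
qed

definition g :: 'a where
  "g = mprod G (map x [- int r .. int r])"

definition head_part :: "bool \<Rightarrow> 'a" where
  "head_part e = (if e then left_seg r else inv (right_seg r))"

definition centre_part :: "bool \<Rightarrow> 'a" where
  "centre_part e = (if e then x 0 else inv (x 0))"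

definition tail_part :: "bool \<Rightarrow> 'a" where
  "tail_part e = (if e then right_seg r else inv (left_seg r))"

lemma head_part_carrier: "head_part e \<in> carrier G"
  unfolding head_part_def using left_seg_carrier right_seg_carrier by simp

lemma centre_part_carrier: "centre_part e \<in> carrier G"
  unfolding centre_part_def using x_carrier[of 0] by simp

lemma tail_part_carrier: "tail_part e \<in> carrier G"
  unfolding tail_part_def using left_seg_carrier right_seg_carrier by simp

lemma g_eq: "g = left_seg r \<otimes> x 0 \<otimes> right_seg r"
proof -
  have "[- int r .. int r] = [- int r .. - 1] @ 0 # [1 .. int r]"
    using upto_split3[of "- int r" 0 "int r"] by simp
  moreover have "set (map x [- int r .. - 1]) \<subseteq> carrier G" "set (map x (0 # [1 .. int r])) \<subseteq> carrier G"
    by (auto intro: x_carrier)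
  ultimately show ?thesis
    unfolding g_def left_seg_def right_seg_def using x_carrier[of 0] left_seg_carrier right_seg_carrier
    by (simp add: mprod_append m_assoc left_seg_def right_seg_def)
qed

lemma g_carrier: "g \<in> carrier G"
  unfolding g_eq using x_carrier[of 0] left_seg_carrier right_seg_carrier by simp

lemma g_power_eq: "(if e then g else inv g) = head_part e \<otimes> centre_part e \<otimes> tail_part e"
  unfolding g_eq head_part_def centre_part_def tail_part_def
  using x_carrier[of 0] left_seg_carrier right_seg_carrier by (simp add: inv_mult_group m_assoc)

definition junction :: "bool \<Rightarrow> 'a \<Rightarrow> bool \<Rightarrow> 'a" where
  "junction e b e' = tail_part e \<otimes> b \<otimes> head_part e'"

lemma junction_cases:
  assumes b: "b \<in> B" and ne: "e \<noteq> e' \<Longrightarrow> b \<noteq> \<one>"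
  shows "reduced_form (odd r) (odd r) (junction e b e') \<or> junction e b e' \<in> C \<and> e' = e"
proof (cases e; cases e')
  assume "e" "e'"
  then show ?thesis
    using right_B_left_in_C_or_reduced_form[OF b] by (auto simp: junction_def head_part_def tail_part_def)
next
  assume "e" "\<not> e'"
  then show ?thesis
    using right_conj_reduced_form[OF b ne] by (simp add: junction_def head_part_def tail_part_def)
next
  assume "\<not> e" "e'"
  then show ?thesis
    using left_conj_reduced_form[OF b ne] by (simp add: junction_def head_part_def tail_part_def)
next
  assume "\<not> e" "\<not> e'"
  have bc: "b \<in> carrier G"
    using b B_subset_carrier by blast
  have "inv b \<in> B"
    using b subgroup.m_inv_closed[OF subgroup_B] by blast
  then have "right_seg r \<otimes> inv b \<otimes> left_seg r \<in> C
      \<or> reduced_form (odd r) (odd r) (right_seg r \<otimes> inv b \<otimes> left_seg r)"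
    by (rule right_B_left_in_C_or_reduced_form)
  moreover have "inv (right_seg r \<otimes> inv b \<otimes> left_seg r) = junction e b e'"
    using \<open>\<not> e\<close> \<open>\<not> e'\<close> bc left_seg_carrier right_seg_carrier
    by (simp add: junction_def head_part_def tail_part_def inv_mult_group m_assoc)
  ultimately show ?thesis
    using reduced_form_inv subgroup.m_inv_closed[OF subgroup_C] \<open>\<not> e\<close> \<open>\<not> e'\<close> by metis
qed

definition syllables :: "(bool \<times> 'a) list \<Rightarrow> (bool \<times> 'a) list" where
  "syllables ps = map (\<lambda>i. (fst (ps ! i),
     junction (fst (ps ! i)) (snd (ps ! i)) (fst (ps ! (Suc i mod length ps))))) [0..<length ps]"

lemma rf_word_eq_one_syllables:
  assumes "ps \<noteq> []" and "set (map snd ps) \<subseteq> carrier G" and "rf_word G g ps = \<one>"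
  shows "mprod G (map (\<lambda>(e, J). centre_part e \<otimes> J) (syllables ps)) = \<one>"
proof -
  define k where "k = length ps"
  define p where "p i = head_part (fst (ps ! (i mod k)))" for i
  define u where "u i = centre_part (fst (ps ! i)) \<otimes> tail_part (fst (ps ! i)) \<otimes> snd (ps ! i)" for i
  have bc: "i < k \<Longrightarrow> snd (ps ! i) \<in> carrier G" for i
    using assms(2) unfolding k_def by (auto simp: set_conv_nth)
  have pc: "p i \<in> carrier G" for i
    unfolding p_def using head_part_carrier by simp
  have uc: "i < k \<Longrightarrow> u i \<in> carrier G" for i
    unfolding u_def using bc centre_part_carrier tail_part_carrier by simp
  have word_eq: "rf_word G g ps = mprod G (map (\<lambda>i. p i \<otimes> u i) [0..<k])"
    unfolding rf_word_def k_def
    by (rule arg_cong[where f = "mprod G"], rule nth_equalityI)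
      (use bc head_part_carrier centre_part_carrier tail_part_carrier in
        \<open>auto simp: case_prod_beta g_power_eq p_def u_def k_def m_assoc\<close>)
  have "mprod G (map (\<lambda>i. p i \<otimes> u i) [0..<k]) \<otimes> p k
      = p 0 \<otimes> mprod G (map (\<lambda>i. u i \<otimes> p (Suc i)) [0..<k])"
    using pc uc by (intro mprod_telescope) auto
  moreover have "p k = p 0"
    by (simp add: p_def)
  ultimately have "p 0 \<otimes> mprod G (map (\<lambda>i. u i \<otimes> p (Suc i)) [0..<k]) = p 0"
    using assms(3) pc unfolding word_eq by simp
  moreover have "mprod G (map (\<lambda>i. u i \<otimes> p (Suc i)) [0..<k]) \<in> carrier G"
    using pc uc by (intro mprod_closed) auto
  ultimately have "mprod G (map (\<lambda>i. u i \<otimes> p (Suc i)) [0..<k]) = \<one>"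
    using pc by simp
  moreover have "map (\<lambda>i. u i \<otimes> p (Suc i)) [0..<k] = map (\<lambda>(e, J). centre_part e \<otimes> J) (syllables ps)"
    unfolding syllables_def k_def[symmetric]
    using bc head_part_carrier centre_part_carrier tail_part_carrier
    by (auto simp: u_def p_def junction_def m_assoc)
  ultimately show ?thesis
    by simp
qed

lemma length_filter_fst_syllables:
  "length (filter (\<lambda>p. fst p = e) (syllables ps)) = length (filter (\<lambda>p. fst p = e) ps)"
proof -
  have "map fst (syllables ps) = map fst ps"
    by (rule nth_equalityI) (simp_all add: syllables_def)
  moreover have "length (filter (\<lambda>p. fst p = e) xs) = length (filter (\<lambda>v. v = e) (map fst xs))"
    for xs :: "(bool \<times> 'a) list"
    by (simp add: filter_map comp_def)
  ultimately show ?thesis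
    by metis
qed

lemma syllables_carrier:
  "set (map snd ps) \<subseteq> carrier G \<Longrightarrow> set (map snd (syllables ps)) \<subseteq> carrier G"
  using head_part_carrier tail_part_carrier by (auto simp: syllables_def junction_def set_conv_nth)

lemma syllables_links:
  assumes B: "\<forall>p\<in>set ps. snd p \<in> B"
    and ne: "\<forall>i<length ps. fst (ps ! i) \<noteq> fst (ps ! ((i + 1) mod length ps)) \<longrightarrow> snd (ps ! i) \<noteq> \<one>"
    and i: "i < length (syllables ps)"
  shows "reduced_form (odd r) (odd r) (snd (syllables ps ! i))
    \<or> snd (syllables ps ! i) \<in> C \<and> fst (syllables ps ! (Suc i mod length (syllables ps))) = fst (syllables ps ! i)"
proof -
  have i: "i < length ps"
    using i by (simp add: syllables_def)
  then have "Suc i mod length ps < length ps"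
    by (intro mod_less_divisor) linarith
  moreover have "snd (ps ! i) \<in> B"
    using B i by simp
  ultimately show ?thesis
    using junction_cases[of "snd (ps ! i)" "fst (ps ! i)" "fst (ps ! (Suc i mod length ps))"] ne i
    by (simp add: syllables_def)
qed

lemma rf_word_g_ne_one:
  assumes centre: "\<And>e. centre_part e \<in> factor (even r) \<and> n_RTF G n C (centre_part e)"
    and ps: "ps \<noteq> []" "\<forall>p\<in>set ps. snd p \<in> B"
      "\<forall>i<length ps. fst (ps ! i) \<noteq> fst (ps ! ((i + 1) mod length ps)) \<longrightarrow> snd (ps ! i) \<noteq> \<one>"
      "enat (length (filter fst ps)) < n" "enat (length (filter (\<lambda>p. \<not> fst p) ps)) < n"
  shows "rf_word G g ps \<noteq> \<one>"
proof
  have ps_carrier: "set (map snd ps) \<subseteq> carrier G"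
    using ps(2) B_subset_carrier by auto
  assume "rf_word G g ps = \<one>"
  with ps(1) ps_carrier have "mprod G (map (\<lambda>(e, J). centre_part e \<otimes> J) (syllables ps)) = \<one>"
    by (rule rf_word_eq_one_syllables)
  moreover have "mprod G (map (\<lambda>(e, J). centre_part e \<otimes> J) (syllables ps)) \<noteq> \<one>"
  proof (rule cyclic_syllables_ne_one[where s = "even r"])
    show "syllables ps \<noteq> []"
      using ps(1) by (simp add: syllables_def)
    show "set (map snd (syllables ps)) \<subseteq> carrier G"
      using ps_carrier by (rule syllables_carrier)
    show "\<forall>i<length (syllables ps). reduced_form (\<not> even r) (\<not> even r) (snd (syllables ps ! i))
        \<or> snd (syllables ps ! i) \<in> C
          \<and> fst (syllables ps ! (Suc i mod length (syllables ps))) = fst (syllables ps ! i)"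
      using syllables_links[OF ps(2,3)] by simp
    show "enat (length (filter (\<lambda>p. fst p = e) (syllables ps))) < n" for e
      unfolding length_filter_fst_syllables using ps(4,5) by (cases e) simp_all
  qed (rule centre)
  ultimately show False
    by contradiction
qed

lemma centre_part_RTF:
  assumes "n_RTF (G\<lparr>carrier := factor (even r)\<rparr>) n C (x 0)"
  shows "centre_part e \<in> factor (even r) \<and> n_RTF G n C (centre_part e)"
proof -
  have "x 0 \<in> factor (even r)" "n_RTF G n C (x 0)"
    using assms n_RTF_carrier_update[OF factor_subset_carrier] by auto
  then show ?thesis
    unfolding centre_part_def
    using n_RTF_inv[OF subgroup_C] subgroup.m_inv_closed[OF subgroup_factor] by auto
qed

lemma n_RF_g:
  assumes n: "2 \<le> n" and centre: "n_RTF (G\<lparr>carrier := factor (even r)\<rparr>) n C (x 0)"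
  shows "n_RF G n B g"
proof -
  note word_ne_one = rf_word_g_ne_one[OF centre_part_RTF[OF centre]]
  have "enat 1 < 2"
    by (simp add: numeral_eq_enat)
  then have one_lt: "enat 1 < n" and zero_lt: "enat 0 < n"
    using n by (auto simp: zero_enat_def[symmetric] intro: less_le_trans)
  have "g \<notin> B"
  proof
    \<comment> \<open>otherwise the one-letter word g g\<inverse> would be a counterexample\<close>
    assume "g \<in> B"
    then have "inv g \<in> B"
      by (rule subgroup.m_inv_closed[OF subgroup_B])
    then have "rf_word G g [(True, inv g)] \<noteq> \<one>"
      using one_lt zero_lt by (intro word_ne_one) auto
    then show False
      using g_carrier by (simp add: rf_word_def)
  qed
  then show ?thesis
    unfolding n_RF_def using g_carrier word_ne_one by blast
qed

end

theorem lemma5p25: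
  fixes G :: "('a, 'b) monoid_scheme" and A B C :: "'a set"
    and x :: "int \<Rightarrow> 'a" and r :: nat and n :: enat
  assumes afp: "amalgamated_free_product G A B C"
    and r1: "r \<ge> 1"
    and xA: "\<And>i. - int r \<le> i \<Longrightarrow> i \<le> int r \<Longrightarrow> even (i - int r) \<Longrightarrow> x i \<in> A - C"
    and xB: "\<And>i. - int r \<le> i \<Longrightarrow> i \<le> int r \<Longrightarrow> odd (i - int r) \<Longrightarrow> x i \<in> B - C"
    and left: "n_RF (G\<lparr>carrier := A\<rparr>) 2 C (x (- int r))"
    and right: "n_RF (G\<lparr>carrier := A\<rparr>) 2 C (x (int r))"
    and n2: "2 \<le> n"
    and mid: "n_RTF (G\<lparr>carrier := (if even r then A else B)\<rparr>) n C (x 0)"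
  shows "n_RF G n B (mprod G (map x [- int r..int r]))"
proof -
  interpret centred_word G A B C x r
  proof (intro centred_word.intro amalgam.intro amalgam_axioms.intro centred_word_axioms.intro)
    show "group G"
      using afp by (simp add: amalgamated_free_product_def)
  qed (use afp r1 xA xB left right in auto)
  have "n_RTF (G\<lparr>carrier := factor (even r)\<rparr>) n C (x 0)"
    using mid by (simp add: factor_def)
  from n_RF_g[OF n2 this] show ?thesis
    by (simp add: g_def)
qed

end
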